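(* Let $p$ be an odd prime and $n\ge1$. Let $g_0,\ldots,g_{p-1}$ be quadratic near-bent functions from $\mathbb{F}_{p^n}$ to $\mathbb{F}_p$ whose corresponding linearized polynomials $L_0,\ldots,L_{p-1}$ all have the same kernel $\{c\beta: c\in\mathbb{F}_p\}$ in $\mathbb{F}_{p^n}$, for some $\beta\in\mathbb{F}_{p^n}^*$. Let $b_0,\ldots,b_{p-1}\in\mathbb{F}_{p^n}$ satisfy $g_k(\beta)+\mathrm{Tr}_n(b_k\beta)=g_0(\beta)+k$ for $0\le k\le p-1$. Then the near-bent functions $f_k(x)=g_k(x)+\mathrm{Tr}_n(b_kx)$, $0\le k\le p-1$, satisfy $\mathrm{supp}(\widehat{f_i})\cap\mathrm{supp}(\widehat{f_j})=\emptyset$ for $0\le i\ne j\le p-1$.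
   Context: $\epsilon_p=e^{2\pi i/p}$, $\mathrm{Tr}_n$ the absolute trace, $\widehat{f}(b)=\sum_{x\in\mathbb{F}_{p^n}}\epsilon_p^{f(x)-\mathrm{Tr}_n(bx)}$, $\mathrm{supp}(\widehat f)=\{b:\widehat f(b)\ne0\}$. Near-bent: $|\widehat{f}(b)|^2\in\{0,p^{n+1}\}$ for all $b$. A quadratic function is $g(x)=\mathrm{Tr}_n\big(\sum_{i=0}^l a_ix^{p^i+1}\big)$ with $a_i\in\mathbb{F}_{p^n}$; its corresponding linearized polynomial is $L(z)=\sum_{i=0}^l\big(a_i^{p^l}z^{p^{l+i}}+a_i^{p^{l-i}}z^{p^{l-i}}\big)$, regarded as an $\mathbb{F}_p$-linear map on $\mathbb{F}_{p^n}$. *)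

theory Defs
  imports "HOL-Analysis.Analysis"
begin

text \<open>The finite field F_{p^n} is modelled by a finite field type 'a with
  CHAR('a) = p and CARD('a) = p^n.  F_p is its prime subfield
  {of_nat k | k < p}; F_p-valued functions are 'a-valued functions whose
  values lie in the prime subfield.\<close>

definition tr :: "nat \<Rightarrow> nat \<Rightarrow> 'a::field \<Rightarrow> 'a" where
  "tr p n x = (\<Sum>i<n. x ^ (p ^ i))"

definition fp_val :: "nat \<Rightarrow> 'a::field \<Rightarrow> nat" where
  "fp_val p y = (THE k. k < p \<and> of_nat k = y)"

definition epsp :: "nat \<Rightarrow> 'a::field \<Rightarrow> complex" where
  "epsp p y = cis (2 * pi * real (fp_val p y) / real p)"

definition walsh :: "nat \<Rightarrow> nat \<Rightarrow> ('a::{field,finite} \<Rightarrow> 'a) \<Rightarrow> 'a \<Rightarrow> complex" where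
  "walsh p n f b = (\<Sum>x\<in>UNIV. epsp p (f x - tr p n (b * x)))"

definition walsh_supp :: "nat \<Rightarrow> nat \<Rightarrow> ('a::{field,finite} \<Rightarrow> 'a) \<Rightarrow> 'a set" where
  "walsh_supp p n f = {b. walsh p n f b \<noteq> 0}"

definition near_bent :: "nat \<Rightarrow> nat \<Rightarrow> ('a::{field,finite} \<Rightarrow> 'a) \<Rightarrow> bool" where
  "near_bent p n f \<longleftrightarrow>
     (\<forall>b. (cmod (walsh p n f b))\<^sup>2 \<in> {0, real p ^ (n + 1)})"

definition quad_fun :: "nat \<Rightarrow> nat \<Rightarrow> nat \<Rightarrow> (nat \<Rightarrow> 'a::field) \<Rightarrow> 'a \<Rightarrow> 'a" where
  "quad_fun p n l a x = tr p n (\<Sum>i\<le>l. a i * x ^ (p ^ i + 1))"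

definition lin_poly :: "nat \<Rightarrow> nat \<Rightarrow> (nat \<Rightarrow> 'a::field) \<Rightarrow> 'a \<Rightarrow> 'a" where
  "lin_poly p l a z =
     (\<Sum>i\<le>l. a i ^ (p ^ l) * z ^ (p ^ (l + i)) + a i ^ (p ^ (l - i)) * z ^ (p ^ (l - i)))"

end

theory Submission
  imports Defs "HOL-Computational_Algebra.Polynomial" "HOL-Number_Theory.Cong"
begin

(* Put f_k(x) = g_k(x) + Tr(b_k x).  Since beta lies in the kernel of the
   linearized polynomial L_k, the quadratic g_k is additive in direction beta:
   g_k(x + beta) = g_k(x) + g_k(beta).  With the hypothesis on b_k this gives
   f_k(x + beta) = f_k(x) + c_k with c_k = g_0(beta) + k in F_p.  For such an F_p-valued
   function the Walsh coefficient at b equals epsilon_p^(c_k - Tr(b beta)) times itself,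
   so it vanishes unless Tr(b beta) = c_k.  Hence supp(hat f_k) lies in the affine
   hyperplane {b. Tr(b beta) = c_k}, and these hyperplanes are pairwise disjoint because
   the c_k are distinct.  Near-bentness of f_k holds because adding a linear term only
   translates the Walsh spectrum. *)

section \<open>Frobenius and the prime subfield\<close>

lemma frobenius_add:
  assumes "CHAR('a::comm_semiring_1) = p" "prime p"
  shows "((x::'a) + y) ^ (p ^ i) = x ^ (p ^ i) + y ^ (p ^ i)"
  using assms by (intro freshmans_dream') auto

lemma frobenius_diff:
  assumes "CHAR('a::comm_ring_1) = p" "prime p"
  shows "((x::'a) - y) ^ (p ^ i) = x ^ (p ^ i) - y ^ (p ^ i)"
proof -
  have "x ^ (p ^ i) = ((x - y) + y) ^ (p ^ i)" by simp
  also have "\<dots> = (x - y) ^ (p ^ i) + y ^ (p ^ i)" by (rule frobenius_add[OF assms])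
  finally show ?thesis by (simp add: eq_diff_eq)
qed

(* Every element of a finite field with q elements satisfies x^q = x, because
   multiplication by a nonzero x permutes the nonzero elements. *)
lemma finite_field_pow_card:
  fixes x :: "'a::{field,finite}"
  shows "x ^ CARD('a) = x"
proof (cases "x = 0")
  case True
  then show ?thesis using finite_UNIV_card_ge_0[where ?'a = 'a] by simp
next
  case False
  let ?U = "UNIV - {0::'a}"
  let ?P = "\<Prod>y\<in>?U. y"
  have "x ^ card ?U * ?P = (\<Prod>y\<in>?U. x * y)"
    by (simp add: prod.distrib)
  also have "\<dots> = ?P"
    by (rule prod.reindex_bij_witness[of _ "\<lambda>y. y / x" "\<lambda>y. x * y"]) (use False in auto)
  finally have "x ^ card ?U = 1"
    using prod_zero_iff[of ?U "\<lambda>y. y"] by (simp del: prod_zero_iff)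
  moreover have "card ?U + 1 = CARD('a)"
    using card_Diff_singleton[of 0 "UNIV :: 'a set"] finite_UNIV_card_ge_0[where ?'a = 'a] by simp
  ultimately show ?thesis by (metis power_add power_one_right mult_1)
qed

definition prime_subfield :: "nat \<Rightarrow> 'a::field set" where
  "prime_subfield p = {y. y ^ p = y}"

lemma prime_subfield_add:
  assumes "CHAR('a::field) = p" "prime p" "y \<in> prime_subfield p" "z \<in> prime_subfield p"
  shows "(y::'a) + z \<in> prime_subfield p"
  using frobenius_add[OF assms(1,2), of y z 1] assms(3,4) by (simp add: prime_subfield_def)

lemma prime_subfield_diff:
  assumes "CHAR('a::field) = p" "prime p" "y \<in> prime_subfield p" "z \<in> prime_subfield p"
  shows "(y::'a) - z \<in> prime_subfield p"
  using frobenius_diff[OF assms(1,2), of y z 1] assms(3,4) by (simp add: prime_subfield_def)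

lemma of_nat_in_prime_subfield:
  assumes "CHAR('a::field) = p" "prime p"
  shows "(of_nat k :: 'a) \<in> prime_subfield p"
proof (induction k)
  case 0
  then show ?case using assms(2) by (simp add: prime_subfield_def prime_gt_0_nat)
next
  case (Suc k)
  have "(1::'a) \<in> prime_subfield p" by (simp add: prime_subfield_def)
  from prime_subfield_add[OF assms Suc this] show ?case by (simp add: add.commute)
qed

lemma of_nat_inj_below_char:
  assumes "CHAR('a::field) = p" "i < p" "j < p" "(of_nat i :: 'a) = of_nat j"
  shows "i = j"
  using assms by (auto simp: of_nat_eq_iff_cong_CHAR cong_def)

(* F_p consists exactly of 0, 1, ..., p - 1: these p elements are Frobenius-fixed, and
   the polynomial X^p - X has at most p roots. *)
lemma prime_subfield_eq:
  assumes "CHAR('a::field) = p" "prime p"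
  shows "prime_subfield p = (of_nat ` {..<p} :: 'a set)"
proof -
  define q :: "'a poly" where "q = monom 1 p + [:0, -1:]"
  have p2: "p \<ge> 2" using assms(2) prime_ge_2_nat by blast
  have deg: "degree q = p" unfolding q_def using p2
    by (subst degree_add_eq_left) (auto simp: degree_monom_eq)
  then have q0: "q \<noteq> 0" using p2 by auto
  have roots: "{x. poly q x = 0} = (prime_subfield p :: 'a set)"
    unfolding q_def prime_subfield_def by (auto simp: poly_monom)
  have sub: "(of_nat ` {..<p} :: 'a set) \<subseteq> prime_subfield p"
    using of_nat_in_prime_subfield[OF assms] by auto
  have card_eq: "card (of_nat ` {..<p} :: 'a set) = p"
    by (subst card_image) (auto intro!: inj_onI of_nat_inj_below_char[OF assms(1)])
  have "finite (prime_subfield p :: 'a set)" "card (prime_subfield p :: 'a set) \<le> p"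
    using poly_roots_finite[OF q0] card_poly_roots_bound[OF q0] deg roots by auto
  then show ?thesis using card_eq sub by (metis card_seteq order_refl)
qed

section \<open>The absolute trace\<close>

lemma tr_zero: "prime p \<Longrightarrow> tr p n (0::'a::field) = 0"
  unfolding tr_def by (auto simp: zero_power prime_gt_0_nat intro!: sum.neutral)

lemma tr_add:
  assumes "CHAR('a::field) = p" "prime p"
  shows "tr p n ((x::'a) + y) = tr p n x + tr p n y"
  unfolding tr_def by (simp add: frobenius_add[OF assms] sum.distrib)

lemma tr_diff:
  assumes "CHAR('a::field) = p" "prime p"
  shows "tr p n ((x::'a) - y) = tr p n x - tr p n y"
  unfolding tr_def by (simp add: frobenius_diff[OF assms] sum_subtractf)

lemma tr_sum:
  assumes "CHAR('a::field) = p" "prime p"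
  shows "tr p n (\<Sum>i\<in>A. (f i::'a)) = (\<Sum>i\<in>A. tr p n (f i))"
  by (induction A rule: infinite_finite_induct) (simp_all add: tr_zero[OF assms(2)] tr_add[OF assms])

(* On F_{p^n} the trace is invariant under Frobenius: x^(p^n) = x makes the sum cyclic. *)
lemma tr_frobenius_invariant:
  assumes "CHAR('a::{field,finite}) = p" "prime p" "CARD('a) = p ^ n"
  shows "tr p n ((x::'a) ^ (p ^ m)) = tr p n x"
proof (induction m)
  case (Suc m)
  define y where "y = x ^ (p ^ m)"
  define f where "f i = y ^ (p ^ i)" for i
  have "f n = f 0" unfolding f_def using finite_field_pow_card[of y] assms(3) by simp
  have "tr p n (y ^ p) = (\<Sum>i<n. f (Suc i))"
    unfolding tr_def f_def by (simp add: power_mult[symmetric] mult.commute)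
  also have "\<dots> = (\<Sum>i<n. f i)"
    using sum.lessThan_Suc_shift[of f n] sum.lessThan_Suc[of f n] \<open>f n = f 0\<close> by simp
  finally have "tr p n (y ^ p) = tr p n y" unfolding tr_def f_def .
  moreover have "x ^ (p ^ Suc m) = y ^ p" unfolding y_def by (metis power_Suc2 power_mult)
  ultimately show ?case using Suc by (simp add: y_def)
qed simp

lemma tr_in_prime_subfield:
  assumes "CHAR('a::{field,finite}) = p" "prime p" "CARD('a) = p ^ n"
  shows "tr p n (x::'a) \<in> prime_subfield p"
proof -
  have "(tr p n x) ^ p = (\<Sum>i<n. (x ^ p) ^ (p ^ i))"
    unfolding tr_def using assms(1,2)
    by (simp add: freshmans_dream_sum power_mult[symmetric] mult.commute)
  also have "\<dots> = tr p n x"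
    using tr_frobenius_invariant[OF assms, of x 1] unfolding tr_def by simp
  finally show ?thesis unfolding prime_subfield_def by simp
qed

section \<open>The additive character of F_p\<close>

lemma fp_val_of_nat:
  assumes "CHAR('a::field) = p" "k < p"
  shows "fp_val p (of_nat k :: 'a) = k"
  unfolding fp_val_def
  by (rule the_equality) (use assms of_nat_inj_below_char[OF assms(1)] in auto)

lemma epsp_of_nat:
  assumes "CHAR('a::field) = p" "prime p"
  shows "epsp p (of_nat k :: 'a) = cis (2 * pi / real p) ^ k"
proof -
  let ?\<omega> = "cis (2 * pi / real p)"
  have p0: "p > 0" using assms prime_gt_0_nat by blast
  have root: "?\<omega> ^ p = 1" using p0 unfolding Complex.DeMoivre by simp
  have "(of_nat k :: 'a) = of_nat (k mod p)"
    using assms(1) by (simp add: of_nat_eq_iff_cong_CHAR cong_def)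
  then have "epsp p (of_nat k :: 'a) = cis (2 * pi * real (k mod p) / real p)"
    unfolding epsp_def using fp_val_of_nat[OF assms(1), of "k mod p"] p0 by simp
  also have "\<dots> = ?\<omega> ^ (k mod p)"
    unfolding Complex.DeMoivre by (simp add: mult_ac)
  also have "\<dots> = ?\<omega> ^ (p * (k div p) + k mod p)"
    by (simp only: power_add power_mult root) simp
  also have "p * (k div p) + k mod p = k" by simp
  finally show ?thesis .
qed

lemma epsp_add:
  assumes "CHAR('a::field) = p" "prime p" "(y::'a) \<in> prime_subfield p" "c \<in> prime_subfield p"
  shows "epsp p (y + c) = epsp p y * epsp p c"
proof -
  obtain j m where "y = of_nat j" "c = of_nat m"
    using assms(3,4) prime_subfield_eq[OF assms(1,2)] by auto
  then show ?thesis by (simp add: epsp_of_nat[OF assms(1,2)] power_add flip: of_nat_add)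
qed

lemma epsp_eq_1_imp_zero:
  assumes "CHAR('a::field) = p" "prime p" "(c::'a) \<in> prime_subfield p" "epsp p c = 1"
  shows "c = 0"
proof -
  have p0: "p > 0" using assms prime_gt_0_nat by blast
  obtain m where m: "m < p" "c = of_nat m"
    using assms(3) prime_subfield_eq[OF assms(1,2)] by auto
  have "cos (2 * pi * real m / real p) = 1"
    using assms(4) unfolding m(2) epsp_def fp_val_of_nat[OF assms(1) m(1)]
    by (metis cis.sel(1) one_complex.sel(1))
  then obtain N :: int where "2 * pi * real m / real p = real_of_int N * 2 * pi"
    using cos_one_2pi_int by blast
  then have "real m = real_of_int N * real p" using p0 by (simp add: field_simps)
  then have "int m = N * int p" by (metis of_int_eq_iff of_int_mult of_int_of_nat_eq)
  then have "p dvd m" by (metis dvd_triv_right int_dvd_int_iff)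
  then have "m = 0" using m(1) by (metis dvd_imp_le not_le neq0_conv)
  then show ?thesis using m(2) by simp
qed

(* A character sum over an F_p-valued function that is translated by a nonzero constant
   c along some direction beta vanishes: the sum equals epsilon_p(c) times itself. *)
lemma char_sum_shift_zero:
  fixes h :: "'a::{field,finite} \<Rightarrow> 'a"
  assumes "CHAR('a) = p" "prime p" "\<And>x. h x \<in> prime_subfield p" "c \<in> prime_subfield p"
    and shift: "\<And>x. h (x + \<beta>) = h x + c" and "c \<noteq> 0"
  shows "(\<Sum>x\<in>UNIV. epsp p (h x)) = 0"
proof -
  let ?S = "\<Sum>x\<in>UNIV. epsp p (h x)"
  have "?S = (\<Sum>x\<in>UNIV. epsp p (h (x + \<beta>)))"
    by (rule sum.reindex_bij_witness[of _ "\<lambda>x. x + \<beta>" "\<lambda>x. x - \<beta>"]) auto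
  also have "\<dots> = ?S * epsp p c"
    by (simp add: shift epsp_add[OF assms(1,2,3,4)] sum_distrib_right)
  finally have "?S * (epsp p c - 1) = 0" by (simp add: algebra_simps)
  moreover have "epsp p c \<noteq> 1" using epsp_eq_1_imp_zero[OF assms(1,2,4)] assms(6) by blast
  ultimately show ?thesis by simp
qed

section \<open>The Walsh transform\<close>

lemma walsh_add_trace:
  fixes f :: "'a::{field,finite} \<Rightarrow> 'a"
  assumes "CHAR('a) = p" "prime p"
  shows "walsh p n (\<lambda>x. f x + tr p n (c * x)) b = walsh p n f (b - c)"
proof -
  have eq: "f x + tr p n (c * x) - tr p n (b * x) = f x - tr p n ((b - c) * x)" for x
    by (simp add: left_diff_distrib tr_diff[OF assms])
  show ?thesis unfolding walsh_def eq by (rule refl)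
qed

lemma near_bent_add_trace:
  fixes f :: "'a::{field,finite} \<Rightarrow> 'a"
  assumes "CHAR('a) = p" "prime p" "near_bent p n f"
  shows "near_bent p n (\<lambda>x. f x + tr p n (c * x))"
  using assms(3) unfolding near_bent_def walsh_add_trace[OF assms(1,2)] by simp

lemma walsh_supp_translation:
  fixes f :: "'a::{field,finite} \<Rightarrow> 'a"
  assumes "CHAR('a) = p" "prime p" "CARD('a) = p ^ n"
    and f_Fp: "\<And>x. f x \<in> prime_subfield p" and c_Fp: "c \<in> prime_subfield p"
    and shift: "\<And>x. f (x + \<beta>) = f x + c"
  shows "walsh_supp p n f \<subseteq> {b. tr p n (b * \<beta>) = c}"
proof
  fix b assume "b \<in> walsh_supp p n f"
  then have nz: "(\<Sum>x\<in>UNIV. epsp p (f x - tr p n (b * x))) \<noteq> 0"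
    unfolding walsh_supp_def walsh_def by simp
  have trFp: "tr p n y \<in> prime_subfield p" for y :: 'a
    by (rule tr_in_prime_subfield[OF assms(1-3)])
  show "b \<in> {b. tr p n (b * \<beta>) = c}"
  proof (rule ccontr)
    assume "b \<notin> {b. tr p n (b * \<beta>) = c}"
    then have c'_nz: "c - tr p n (b * \<beta>) \<noteq> 0" by simp
    have h_shift: "f (x + \<beta>) - tr p n (b * (x + \<beta>))
                   = (f x - tr p n (b * x)) + (c - tr p n (b * \<beta>))" for x
      unfolding shift distrib_left tr_add[OF assms(1,2)] by (simp add: algebra_simps)
    have c'_Fp: "c - tr p n (b * \<beta>) \<in> prime_subfield p"
      by (rule prime_subfield_diff[OF assms(1,2) c_Fp trFp])
    have h_Fp: "f x - tr p n (b * x) \<in> prime_subfield p" for x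
      by (rule prime_subfield_diff[OF assms(1,2) f_Fp trFp])
    have "(\<Sum>x\<in>UNIV. epsp p (f x - tr p n (b * x))) = 0"
      by (rule char_sum_shift_zero[where h = "\<lambda>x. f x - tr p n (b * x)",
                                    OF assms(1,2) h_Fp c'_Fp h_shift c'_nz])
    with nz show False by contradiction
  qed
qed

section \<open>Quadratic functions\<close>

lemma quad_fun_in_prime_subfield:
  assumes "CHAR('a::{field,finite}) = p" "prime p" "CARD('a) = p ^ n"
  shows "quad_fun p n l a (x::'a) \<in> prime_subfield p"
  unfolding quad_fun_def by (rule tr_in_prime_subfield[OF assms])

(* Each cross term of (x + beta)^(p^i + 1), moved under the trace by Frobenius
   invariance, contributes x^(p^l) times the i-th summand of L(beta). *)
lemma tr_cross_term:
  assumes "CHAR('a::{field,finite}) = p" "prime p" "CARD('a) = p ^ n" "i \<le> l"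
  shows "tr p n ((c::'a) * x ^ (p ^ i) * \<beta> + c * x * \<beta> ^ (p ^ i)) =
         tr p n (x ^ (p ^ l) * (c ^ (p ^ l) * \<beta> ^ (p ^ (l + i))
                                 + c ^ (p ^ (l - i)) * \<beta> ^ (p ^ (l - i))))"
proof -
  have e1: "p ^ i * p ^ (l - i) = p ^ l" using assms(4) by (simp flip: power_add)
  have e2: "p ^ i * p ^ l = p ^ (l + i)" by (simp add: power_add mult.commute)
  have "tr p n (c * x ^ (p ^ i) * \<beta>) = tr p n ((c * x ^ (p ^ i) * \<beta>) ^ (p ^ (l - i)))"
    by (rule tr_frobenius_invariant[OF assms(1-3), symmetric])
  also have "\<dots> = tr p n (c ^ (p ^ (l - i)) * x ^ (p ^ l) * \<beta> ^ (p ^ (l - i)))"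
    by (simp add: power_mult_distrib flip: power_mult e1)
  finally have t1: "tr p n (c * x ^ (p ^ i) * \<beta>)
                    = tr p n (c ^ (p ^ (l - i)) * x ^ (p ^ l) * \<beta> ^ (p ^ (l - i)))" .
  have "tr p n (c * x * \<beta> ^ (p ^ i)) = tr p n ((c * x * \<beta> ^ (p ^ i)) ^ (p ^ l))"
    by (rule tr_frobenius_invariant[OF assms(1-3), symmetric])
  also have "\<dots> = tr p n (c ^ (p ^ l) * x ^ (p ^ l) * \<beta> ^ (p ^ (l + i)))"
    by (simp add: power_mult_distrib flip: power_mult e2)
  finally have t2: "tr p n (c * x * \<beta> ^ (p ^ i))
                    = tr p n (c ^ (p ^ l) * x ^ (p ^ l) * \<beta> ^ (p ^ (l + i)))" .
  show ?thesis
    unfolding tr_add[OF assms(1,2)] t1 t2 distrib_left by (simp add: ac_simps)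
qed

lemma quad_fun_add:
  assumes "CHAR('a::{field,finite}) = p" "prime p" "CARD('a) = p ^ n"
  shows "quad_fun p n l a ((x::'a) + \<beta>) = quad_fun p n l a x + quad_fun p n l a \<beta>
           + tr p n (x ^ (p ^ l) * lin_poly p l a \<beta>)"
proof -
  have expand: "a i * (x + \<beta>) ^ (p ^ i + 1) = a i * x ^ (p ^ i + 1) + a i * \<beta> ^ (p ^ i + 1)
           + (a i * x ^ (p ^ i) * \<beta> + a i * x * \<beta> ^ (p ^ i))" for i
  proof -
    have "(x + \<beta>) ^ (p ^ i + 1) = (x ^ (p ^ i) + \<beta> ^ (p ^ i)) * (x + \<beta>)"
      by (simp add: frobenius_add[OF assms(1,2)] mult.commute)
    then show ?thesis by (simp add: algebra_simps)
  qed
  have "quad_fun p n l a (x + \<beta>) = quad_fun p n l a x + quad_fun p n l a \<beta>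
           + (\<Sum>i\<le>l. tr p n (a i * x ^ (p ^ i) * \<beta> + a i * x * \<beta> ^ (p ^ i)))"
    unfolding quad_fun_def expand
    by (simp add: sum.distrib tr_add[OF assms(1,2)] tr_sum[OF assms(1,2)])
  also have "(\<Sum>i\<le>l. tr p n (a i * x ^ (p ^ i) * \<beta> + a i * x * \<beta> ^ (p ^ i)))
             = tr p n (x ^ (p ^ l) * lin_poly p l a \<beta>)"
    unfolding lin_poly_def sum_distrib_left tr_sum[OF assms(1,2)]
    by (rule sum.cong) (auto intro: tr_cross_term[OF assms])
  finally show ?thesis .
qed

lemma quad_fun_shift_kernel:
  assumes "CHAR('a::{field,finite}) = p" "prime p" "CARD('a) = p ^ n"
    and "lin_poly p l a \<beta> = 0"
  shows "quad_fun p n l a ((x::'a) + \<beta>) = quad_fun p n l a x + quad_fun p n l a \<beta>"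
  using quad_fun_add[OF assms(1-3), of l a x \<beta>] assms(4) tr_zero[OF assms(2)] by simp

lemma quad_plus_linear_shift_kernel:
  assumes "CHAR('a::{field,finite}) = p" "prime p" "CARD('a) = p ^ n"
    and "lin_poly p l a \<beta> = 0"
  shows "quad_fun p n l a ((x::'a) + \<beta>) + tr p n (b * (x + \<beta>))
         = (quad_fun p n l a x + tr p n (b * x)) + (quad_fun p n l a \<beta> + tr p n (b * \<beta>))"
  unfolding quad_fun_shift_kernel[OF assms] distrib_left tr_add[OF assms(1,2)]
  by (simp only: add_ac)

theorem theorem5:
  fixes p n :: nat
    and g :: "nat \<Rightarrow> 'a::{field,finite} \<Rightarrow> 'a"
    and l :: "nat \<Rightarrow> nat"
    and a :: "nat \<Rightarrow> nat \<Rightarrow> 'a"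
    and b :: "nat \<Rightarrow> 'a"
    and \<beta> :: 'a
  assumes "prime p" and "odd p" and "n \<ge> 1"
    and "CHAR('a) = p" and "CARD('a) = p ^ n"
    and quad: "\<And>k. k < p \<Longrightarrow> g k = quad_fun p n (l k) (a k)"
    and nb: "\<And>k. k < p \<Longrightarrow> near_bent p n (g k)"
    and "\<beta> \<noteq> 0"
    and ker: "\<And>k. k < p \<Longrightarrow>
               {z. lin_poly p (l k) (a k) z = 0} = {of_nat c * \<beta> | c. c < p}"
    and shift: "\<And>k. k < p \<Longrightarrow>
               g k \<beta> + tr p n (b k * \<beta>) = g 0 \<beta> + of_nat k"
  shows "(\<forall>k<p. near_bent p n (\<lambda>x. g k x + tr p n (b k * x))) \<and>
         (\<forall>i<p. \<forall>j<p. i \<noteq> j \<longrightarrow>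
            walsh_supp p n (\<lambda>x. g i x + tr p n (b i * x)) \<inter>
            walsh_supp p n (\<lambda>x. g j x + tr p n (b j * x)) = {})"
proof -
  note F = assms(4,1,5)
  define f where "f k x = g k x + tr p n (b k * x)" for k x
  have "p > 1" using assms(1) prime_gt_1_nat by blast
  have g_Fp: "g k x \<in> prime_subfield p" if "k < p" for k x
    using quad_fun_in_prime_subfield[OF F] quad[OF that] by simp
  \<comment> \<open>beta = 1 * beta lies in every kernel, so each f_k is translated by g_0(beta) + k.\<close>
  have f_shift: "f k (x + \<beta>) = f k x + (g 0 \<beta> + of_nat k)" if "k < p" for k x
  proof -
    have "\<beta> \<in> {of_nat c * \<beta> | c. c < p}"
      using \<open>p > 1\<close> by (intro CollectI exI[of _ 1]) simp
    then have "lin_poly p (l k) (a k) \<beta> = 0" using ker[OF that] by blast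
    from quad_plus_linear_shift_kernel[OF F this, of x "b k"] show ?thesis
      unfolding f_def quad[OF that] shift[OF that, unfolded quad[OF that]] .
  qed
  have f_Fp: "f k x \<in> prime_subfield p" if "k < p" for k x
    unfolding f_def by (intro prime_subfield_add[OF F(1,2)] g_Fp[OF that] tr_in_prime_subfield[OF F])
  have supp: "walsh_supp p n (f k) \<subseteq> {b'. tr p n (b' * \<beta>) = g 0 \<beta> + of_nat k}"
    if "k < p" for k
    using \<open>p > 1\<close> that
    by (intro walsh_supp_translation[OF F] f_shift f_Fp prime_subfield_add[OF F(1,2)]
        g_Fp of_nat_in_prime_subfield[OF F(1,2)]) auto
  have "walsh_supp p n (f i) \<inter> walsh_supp p n (f j) = {}" if "i < p" "j < p" "i \<noteq> j" for i j
  proof -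
    have "(of_nat i :: 'a) \<noteq> of_nat j" using of_nat_inj_below_char[OF F(1) that(1,2)] that(3) by blast
    then have "{b'. tr p n (b' * \<beta>) = g 0 \<beta> + of_nat i}
               \<inter> {b'. tr p n (b' * \<beta>) = g 0 \<beta> + of_nat j} = {}" by auto
    then show ?thesis using supp[OF that(1)] supp[OF that(2)] by blast
  qed
  moreover have "near_bent p n (f k)" if "k < p" for k
    unfolding f_def by (rule near_bent_add_trace[OF F(1,2) nb[OF that]])
  ultimately show ?thesis unfolding f_def[abs_def] by blast
qed

end
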